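(* Let $\mathcal{X},\mathcal{Y},\mathcal{H}$ be Hilbert spaces with either $\mathcal{H}=\mathbb{C}$ or $\mathcal{H}=\mathcal{Y}$. If $g\in\mathcal{SA}_\Psi(\mathcal{X},\mathcal{Y})$ and $f\in\mathcal{SA}_\Psi(\mathcal{Y},\mathcal{H})$, then the pointwise product $fg:\Omega\to B(\mathcal{X},\mathcal{H})$, $(fg)(z)=f(z)g(z)$, belongs to $\mathcal{SA}_\Psi(\mathcal{X},\mathcal{H})$.
   Context: Let $\Omega\subset\mathbb{C}^n$ be a bounded domain. A family $\Psi$ of functions $\Omega\to\mathbb{C}$ is a collection of test functions if $\sup_{\psi\in\Psi}|\psi(x)|<1$ for each $x\in\Omega$ and, for each finite $F\subset\Omega$, the restrictions $\{\psi|_F\}$ together with $1$ generate the algebra of all functions $F\to\mathbb{C}$. For a Hilbert space $\mathcal{E}$, a function $K:\Omega\times\Omega\to B(\mathcal{E})$ is a positive kernel if $\sum_{i,j=1}^n\langle K(x_i,x_j)e_j,e_i\rangle\ge 0$ for all finite choices of $x_i\in\Omega$, $e_i\in\mathcal{E}$; $\mathcal{H}(K)$ is its reproducing kernel Hilbert space. $K$ is $\Psi$-admissible if for each $\psi\in\Psi$ multiplication by $\psi$ is a contraction on $\mathcal{H}(K)$; $\mathcal{K}_\Psi(\mathcal{E})$ is the set of such kernels. For Hilbert spaces $\mathcal{U},\mathcal{Y}$, $H^\infty_\Psi(\mathcal{U},\mathcal{Y})$ is the set of $S:\Omega\to B(\mathcal{U},\mathcal{Y})$ for which there is $C\ge0$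 with $(x,y)\mapsto(C^2I_{\mathcal{Y}}-S(x)S(y)^* )\otimes K(x,y)$ a positive $B(\mathcal{Y}\otimes\mathcal{Y})$-valued kernel for every $K\in\mathcal{K}_\Psi(\mathcal{Y})$; $\|S\|_\Psi$ is the infimum of such $C$, and the $\Psi$-Schur–Agler class is $\mathcal{SA}_\Psi(\mathcal{U},\mathcal{Y})=\{S\in H^\infty_\Psi(\mathcal{U},\mathcal{Y}):\|S\|_\Psi\le 1\}$. *)

theory Defs
  imports "HOL-Analysis.Analysis"
begin

class cvec = ab_group_add +
  fixes hscale :: "complex \<Rightarrow> 'a \<Rightarrow> 'a" (infixr \<open>*\<^sub>H\<close> 75)
  assumes hscale_add_right: "c *\<^sub>H (x + y) = c *\<^sub>H x + c *\<^sub>H y"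
    and hscale_add_left: "(c + d) *\<^sub>H x = c *\<^sub>H x + d *\<^sub>H x"
    and hscale_hscale: "c *\<^sub>H (d *\<^sub>H x) = (c * d) *\<^sub>H x"
    and hscale_one: "1 *\<^sub>H x = x"

class cinner_space = cvec +
  fixes hinner :: "'a \<Rightarrow> 'a \<Rightarrow> complex"
  assumes hinner_add_left: "hinner (x + y) z = hinner x z + hinner y z"
    and hinner_scale_left: "hinner (c *\<^sub>H x) y = c * hinner x y"
    and hinner_commute: "hinner x y = cnj (hinner y x)"
    and hinner_self_real: "Im (hinner x x) = 0"
    and hinner_self_nonneg: "0 \<le> Re (hinner x x)"
    and hinner_self_eq_0: "hinner x x = 0 \<longleftrightarrow> x = 0"

definition hnorm :: "'a::cinner_space \<Rightarrow> real" where
  "hnorm x = sqrt (Re (hinner x x))"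

class chilbert = cinner_space +
  assumes hcomplete:
    "(\<forall>e>0. \<exists>N. \<forall>m\<ge>N. \<forall>n\<ge>N. sqrt (Re (hinner (X m - X n) (X m - X n))) < e) \<Longrightarrow>
      \<exists>L. (\<lambda>n. sqrt (Re (hinner (X n - L) (X n - L)))) \<longlonglongrightarrow> 0"

instantiation complex :: chilbert
begin
definition hscale_complex :: "complex \<Rightarrow> complex \<Rightarrow> complex" where
  "hscale_complex c x = c * x"
definition hinner_complex :: "complex \<Rightarrow> complex \<Rightarrow> complex" where
  "hinner_complex x y = x * cnj y"


instance
proof
  have hc: "\<And>x::complex. sqrt (Re (hinner x x)) = cmod x"
    by (simp add: hinner_complex_def complex_mult_cnj cmod_def power2_eq_square)
  fix X :: "nat \<Rightarrow> complex"
  assume "\<forall>e>0. \<exists>N. \<forall>m\<ge>N. \<forall>n\<ge>N. sqrt (Re (hinner (X m - X n) (X m - X n))) < e"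
  then have "Cauchy X"
    by (simp add: hc Cauchy_def dist_norm)
  then obtain L where "X \<longlonglongrightarrow> L" using convergent_eq_Cauchy convergent_def by blast
  then have "(\<lambda>n. cmod (X n - L)) \<longlonglongrightarrow> 0"
    using LIM_zero tendsto_norm_zero by blast
  then show "\<exists>L. (\<lambda>n. sqrt (Re (hinner (X n - L) (X n - L)))) \<longlonglongrightarrow> 0"
    by (auto simp: hc)
qed (auto simp: hscale_complex_def hinner_complex_def algebra_simps complex_eq_iff)
end

definition bounded_op :: "('a::chilbert \<Rightarrow> 'b::chilbert) \<Rightarrow> bool" where
  "bounded_op T \<longleftrightarrow> (\<forall>x y. T (x + y) = T x + T y) \<and> (\<forall>c x. T (c *\<^sub>H x) = c *\<^sub>H T x)
     \<and> (\<exists>M. \<forall>x. hnorm (T x) \<le> M * hnorm x)"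

definition adj :: "('a::chilbert \<Rightarrow> 'b::chilbert) \<Rightarrow> 'b \<Rightarrow> 'a" where
  "adj T = (SOME T'. \<forall>x y. hinner (T x) y = hinner x (T' y))"

inductive_set gen_alg :: "('z \<Rightarrow> complex) set \<Rightarrow> ('z \<Rightarrow> complex) set" for \<Psi> where
  one: "(\<lambda>_. 1) \<in> gen_alg \<Psi>"
| gen: "\<psi> \<in> \<Psi> \<Longrightarrow> \<psi> \<in> gen_alg \<Psi>"
| add: "f \<in> gen_alg \<Psi> \<Longrightarrow> g \<in> gen_alg \<Psi> \<Longrightarrow> (\<lambda>x. f x + g x) \<in> gen_alg \<Psi>"
| smult: "f \<in> gen_alg \<Psi> \<Longrightarrow> (\<lambda>x. c * f x) \<in> gen_alg \<Psi>"
| mult: "f \<in> gen_alg \<Psi> \<Longrightarrow> g \<in> gen_alg \<Psi> \<Longrightarrow> (\<lambda>x. f x * g x) \<in> gen_alg \<Psi>"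

definition test_functions :: "'z set \<Rightarrow> ('z \<Rightarrow> complex) set \<Rightarrow> bool" where
  "test_functions \<Omega> \<Psi> \<longleftrightarrow>
     (\<forall>x\<in>\<Omega>. bdd_above ((\<lambda>\<psi>. cmod (\<psi> x)) ` \<Psi>) \<and> (SUP \<psi>\<in>\<Psi>. cmod (\<psi> x)) < 1) \<and>
     (\<forall>F. finite F \<and> F \<subseteq> \<Omega> \<longrightarrow>
        (\<forall>h::'z \<Rightarrow> complex. \<exists>p\<in>gen_alg \<Psi>. \<forall>x\<in>F. p x = h x))"

definition nonneg_c :: "complex \<Rightarrow> bool" where
  "nonneg_c s \<longleftrightarrow> Im s = 0 \<and> 0 \<le> Re s"

definition pos_kernel :: "'z set \<Rightarrow> ('z \<Rightarrow> 'z \<Rightarrow> 'e::chilbert \<Rightarrow> 'e) \<Rightarrow> bool" where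
  "pos_kernel \<Omega> K \<longleftrightarrow> (\<forall>(n::nat) (x::nat \<Rightarrow> 'z) (e::nat \<Rightarrow> 'e). (\<forall>i<n. x i \<in> \<Omega>) \<longrightarrow>
     nonneg_c (\<Sum>i<n. \<Sum>j<n. hinner (K (x i) (x j) (e j)) (e i)))"

text \<open>\<open>rkhs_ball \<Omega> K h C\<close>: the function h belongs to H(K) and has norm at most C.
  (For a positive kernel, h \<in> H(K) with norm \<le> C iff the functional
  \<open>\<Sum> K(.,x_i) e_i \<mapsto> \<Sum> \<langle>h(x_i), e_i\<rangle>\<close> is bounded by C on the dense span of kernel functions.)\<close>
definition rkhs_ball :: "'z set \<Rightarrow> ('z \<Rightarrow> 'z \<Rightarrow> 'e::chilbert \<Rightarrow> 'e) \<Rightarrow> ('z \<Rightarrow> 'e) \<Rightarrow> real \<Rightarrow> bool" where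
  "rkhs_ball \<Omega> K h C \<longleftrightarrow> 0 \<le> C \<and>
     (\<forall>(n::nat) (x::nat \<Rightarrow> 'z) (e::nat \<Rightarrow> 'e). (\<forall>i<n. x i \<in> \<Omega>) \<longrightarrow>
        (cmod (\<Sum>i<n. hinner (h (x i)) (e i)))\<^sup>2 \<le>
          C\<^sup>2 * Re (\<Sum>i<n. \<Sum>j<n. hinner (K (x i) (x j) (e j)) (e i)))"

definition mult_contraction :: "'z set \<Rightarrow> ('z \<Rightarrow> complex) \<Rightarrow> ('z \<Rightarrow> 'z \<Rightarrow> 'e::chilbert \<Rightarrow> 'e) \<Rightarrow> bool" where
  "mult_contraction \<Omega> \<psi> K \<longleftrightarrow>
     (\<forall>h C. rkhs_ball \<Omega> K h C \<longrightarrow> rkhs_ball \<Omega> K (\<lambda>z. \<psi> z *\<^sub>H h z) C)"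

definition admissible_kernels :: "'z set \<Rightarrow> ('z \<Rightarrow> complex) set \<Rightarrow> ('z \<Rightarrow> 'z \<Rightarrow> 'e::chilbert \<Rightarrow> 'e) set" where
  "admissible_kernels \<Omega> \<Psi> = {K. (\<forall>x\<in>\<Omega>. \<forall>y\<in>\<Omega>. bounded_op (K x y)) \<and> pos_kernel \<Omega> K \<and>
                                 (\<forall>\<psi>\<in>\<Psi>. mult_contraction \<Omega> \<psi> K)}"

text \<open>Positivity of the B(Y \<otimes> Y)-valued kernel A(x,y) \<otimes> B(x,y), tested on vectors of the
  (dense) algebraic tensor product: h_j = \<Sum>_{k<m} a j k \<otimes> b j k.\<close>
definition pos_tensor_kernel :: "'z set \<Rightarrow> ('z \<Rightarrow> 'z \<Rightarrow> 'y::chilbert \<Rightarrow> 'y) \<Rightarrow> ('z \<Rightarrow> 'z \<Rightarrow> 'y \<Rightarrow> 'y) \<Rightarrow> bool" where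
  "pos_tensor_kernel \<Omega> A B \<longleftrightarrow>
    (\<forall>(n::nat) (m::nat) (x::nat \<Rightarrow> 'z) (a::nat \<Rightarrow> nat \<Rightarrow> 'y) (b::nat \<Rightarrow> nat \<Rightarrow> 'y).
       (\<forall>i<n. x i \<in> \<Omega>) \<longrightarrow>
       nonneg_c (\<Sum>i<n. \<Sum>j<n. \<Sum>k<m. \<Sum>l<m.
          hinner (A (x i) (x j) (a j k)) (a i l) * hinner (B (x i) (x j) (b j k)) (b i l)))"

definition SA_bound :: "'z set \<Rightarrow> ('z \<Rightarrow> complex) set \<Rightarrow> ('z \<Rightarrow> 'u::chilbert \<Rightarrow> 'y::chilbert) \<Rightarrow> real \<Rightarrow> bool" where
  "SA_bound \<Omega> \<Psi> S C \<longleftrightarrow> 0 \<le> C \<and>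
     (\<forall>K \<in> admissible_kernels \<Omega> \<Psi>.
        pos_tensor_kernel \<Omega> (\<lambda>x y v. (complex_of_real (C\<^sup>2)) *\<^sub>H v - S x (adj (S y) v)) K)"

definition Hinf_Psi :: "'z set \<Rightarrow> ('z \<Rightarrow> complex) set \<Rightarrow> ('z \<Rightarrow> 'u::chilbert \<Rightarrow> 'y::chilbert) set" where
  "Hinf_Psi \<Omega> \<Psi> = {S. (\<forall>x\<in>\<Omega>. bounded_op (S x)) \<and> (\<exists>C. SA_bound \<Omega> \<Psi> S C)}"

definition Psi_norm :: "'z set \<Rightarrow> ('z \<Rightarrow> complex) set \<Rightarrow> ('z \<Rightarrow> 'u::chilbert \<Rightarrow> 'y::chilbert) \<Rightarrow> real" where
  "Psi_norm \<Omega> \<Psi> S = Inf {C. SA_bound \<Omega> \<Psi> S C}"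

definition SA_Psi :: "'z set \<Rightarrow> ('z \<Rightarrow> complex) set \<Rightarrow> ('z \<Rightarrow> 'u::chilbert \<Rightarrow> 'y::chilbert) set" where
  "SA_Psi \<Omega> \<Psi> = {S \<in> Hinf_Psi \<Omega> \<Psi>. Psi_norm \<Omega> \<Psi> S \<le> 1}"

end

theory Submission
  imports Defs
begin

(* Write D(S,C)(x,y) = C\<^sup>2 - S(x) S(y)\<^sup>* for the defect kernel of S with bound C. Then
     D(fg, C\<^sub>f C\<^sub>g)(x,y) = C\<^sub>g\<^sup>2 D(f,C\<^sub>f)(x,y) + f(x) D(g,C\<^sub>g)(x,y) f(y)\<^sup>*.
   Tensored with an admissible kernel K on H, the first term is positive because f is
   Schur-Agler, and the second is the compression of D(g,C\<^sub>g) \<otimes> K by f\<^sup>* \<otimes> 1. For H = Y the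
   positivity of D(g,C\<^sub>g) \<otimes> K is the Schur-Agler property of g. For H = \<complex>, an element
   \<Sum>\<^sub>k a\<^sub>k \<otimes> b\<^sub>k of Y \<otimes> \<complex> is the single vector \<Sum>\<^sub>k b\<^sub>k a\<^sub>k, so K may be replaced by the
   Y-valued kernel K(x,y) e e\<^sup>* for a unit vector e, which is again admissible. Letting C\<^sub>f
   and C\<^sub>g decrease to the \<Psi>-norms of f and g gives the bound 1 for fg.
   The adjoints presupposed by the definition exist by the Riesz representation theorem, which
   follows from the existence of a vector of minimal norm in a level set {\<phi> = 1}. *)

section \<open>Complex inner product spaces\<close>

lemma hscale_zero_left [simp]: "(0::complex) *\<^sub>H (x::'a::cvec) = 0"
  using hscale_add_left[of 0 0 x] by simp

lemma hscale_zero_right [simp]: "c *\<^sub>H (0::'a::cvec) = 0"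
  using hscale_add_right[of c 0 0] by simp

lemma hscale_minus_left: "(- c) *\<^sub>H x = - (c *\<^sub>H (x::'a::cvec))"
  using hscale_add_left[of c "- c" x] by (simp add: add_eq_0_iff)

lemma hscale_minus_right: "c *\<^sub>H (- x) = - (c *\<^sub>H (x::'a::cvec))"
  using hscale_add_right[of c x "- x"] by (simp add: add_eq_0_iff)

lemma hscale_diff_right: "c *\<^sub>H (x - y) = c *\<^sub>H x - c *\<^sub>H (y::'a::cvec)"
  by (simp only: diff_conv_add_uminus hscale_add_right hscale_minus_right)

lemma hinner_zero_left [simp]: "hinner 0 (y::'a::cinner_space) = 0"
  using hinner_add_left[of 0 0 y] by simp

lemma hinner_zero_right [simp]: "hinner (x::'a::cinner_space) 0 = 0"
  by (metis complex_cnj_zero hinner_commute hinner_zero_left)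

lemma hinner_add_right: "hinner (x::'a::cinner_space) (y + z) = hinner x y + hinner x z"
  by (metis complex_cnj_add hinner_add_left hinner_commute)

lemma hinner_scale_right: "hinner (x::'a::cinner_space) (c *\<^sub>H y) = cnj c * hinner x y"
  by (metis complex_cnj_mult hinner_commute hinner_scale_left)

lemma hinner_minus_left: "hinner (- x) (y::'a::cinner_space) = - hinner x y"
  using hinner_add_left[of x "- x" y] by (simp add: add_eq_0_iff)

lemma hinner_minus_right: "hinner x (- y::'a::cinner_space) = - hinner x y"
  by (metis complex_cnj_minus hinner_commute hinner_minus_left)

lemma hinner_diff_left: "hinner (x - y) (z::'a::cinner_space) = hinner x z - hinner y z"
  by (simp only: diff_conv_add_uminus hinner_add_left hinner_minus_left)

lemma hinner_diff_right: "hinner x (y - z::'a::cinner_space) = hinner x y - hinner x z"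
  by (simp only: diff_conv_add_uminus hinner_add_right hinner_minus_right)

lemma hinner_sum_left: "hinner (\<Sum>k\<in>A. u k) (y::'a::cinner_space) = (\<Sum>k\<in>A. hinner (u k) y)"
  by (rule sum_comp_morphism[where h = "\<lambda>x. hinner x y", symmetric, unfolded o_def])
    (simp_all add: hinner_add_left)

lemma hinner_sum_right: "hinner (x::'a::cinner_space) (\<Sum>k\<in>A. u k) = (\<Sum>k\<in>A. hinner x (u k))"
  using hinner_commute[of x] by (simp add: hinner_sum_left cnj_sum)

lemma hinner_self_of_real: "hinner x (x::'a::cinner_space) = of_real (Re (hinner x x))"
  by (simp add: complex_eq_iff hinner_self_real)

lemma hinner_eqI: "(\<And>x. hinner x u = hinner x v) \<Longrightarrow> u = (v::'a::cinner_space)"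
  by (metis eq_iff_diff_eq_0 hinner_diff_right hinner_self_eq_0)

lemma hnorm_nonneg [simp]: "0 \<le> hnorm x"
  by (simp add: hnorm_def hinner_self_nonneg)

lemma hnorm_square: "(hnorm x)\<^sup>2 = Re (hinner x x)"
  by (simp add: hnorm_def hinner_self_nonneg)

lemma hinner_self_eq_hnorm: "hinner x x = of_real ((hnorm x)\<^sup>2)"
  by (simp add: hnorm_square flip: hinner_self_of_real)

lemma hnorm_eq_0 [simp]: "hnorm x = 0 \<longleftrightarrow> x = 0"
  by (metis hinner_self_eq_0 hinner_self_eq_hnorm of_real_eq_0_iff zero_eq_power2)

lemma hnorm_complex: "hnorm (z::complex) = cmod z"
  by (simp add: hnorm_def hinner_complex_def complex_mult_cnj cmod_def power2_eq_square)

lemma hnorm_hscale: "hnorm (c *\<^sub>H x) = cmod c * hnorm x"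
proof -
  have "hinner (c *\<^sub>H x) (c *\<^sub>H x) = c * cnj c * hinner x x"
    by (simp add: hinner_scale_left hinner_scale_right mult.assoc)
  then have "(hnorm (c *\<^sub>H x))\<^sup>2 = Re (c * cnj c * hinner x x)"
    by (simp add: hnorm_square)
  also have "\<dots> = (cmod c * hnorm x)\<^sup>2"
    by (simp add: hinner_self_eq_hnorm power_mult_distrib flip: complex_norm_square)
  finally show ?thesis
    by (simp add: power2_eq_iff_nonneg)
qed

lemma hnorm_diff_projection:
  assumes "y \<noteq> 0"
  shows "(hnorm (x - (hinner x y / hinner y y) *\<^sub>H y))\<^sup>2 = (hnorm x)\<^sup>2 - (cmod (hinner x y))\<^sup>2 / (hnorm y)\<^sup>2"
proof -
  define p r where "p = hinner x y" and "r = (hnorm y)\<^sup>2"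
  have r: "hinner y y = of_real r" and "r \<noteq> 0"
    using assms by (simp_all add: r_def hinner_self_eq_hnorm)
  have expand: "hinner (x - t *\<^sub>H y) (x - t *\<^sub>H y)
      = of_real ((hnorm x)\<^sup>2) - cnj t * p - t * cnj p + t * cnj t * of_real r" for t
    using hinner_commute[of y x]
    by (simp add: p_def r hinner_self_eq_hnorm[of x] hinner_diff_left hinner_diff_right
        hinner_scale_left hinner_scale_right algebra_simps)
  have pp: "(complex_of_real (cmod p))\<^sup>2 = p * cnj p"
    using complex_norm_square[of p] by simp
  have coeffs: "cnj (p / of_real r) * p = of_real ((cmod p)\<^sup>2 / r)"
    and "p / of_real r * cnj p = of_real ((cmod p)\<^sup>2 / r)"
    and "p / of_real r * cnj (p / of_real r) * of_real r = of_real ((cmod p)\<^sup>2 / r)"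
    using \<open>r \<noteq> 0\<close> by (simp_all add: field_simps pp)
  have "hinner (x - (p / of_real r) *\<^sub>H y) (x - (p / of_real r) *\<^sub>H y)
      = of_real ((hnorm x)\<^sup>2 - (cmod p)\<^sup>2 / r)"
    unfolding expand coeffs by simp
  then show ?thesis
    unfolding r[symmetric] unfolding p_def r_def by (simp add: hnorm_square)
qed

lemma hinner_cauchy_schwarz: "cmod (hinner x y) \<le> hnorm x * hnorm y"
proof (cases "y = 0")
  case False
  then have "(cmod (hinner x y))\<^sup>2 / (hnorm y)\<^sup>2 \<le> (hnorm x)\<^sup>2"
    using hnorm_diff_projection[OF False, of x] by (metis diff_ge_0_iff_ge zero_le_power2)
  moreover have "0 < (hnorm y)\<^sup>2"
    using False by simp
  ultimately have "(cmod (hinner x y))\<^sup>2 \<le> (hnorm x * hnorm y)\<^sup>2"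
    by (simp add: pos_divide_le_eq power_mult_distrib)
  then show ?thesis
    by (rule power2_le_imp_le) simp
qed simp

lemma hnorm_triangle: "hnorm (x + y) \<le> hnorm x + hnorm y"
proof -
  have "(hnorm (x + y))\<^sup>2 = (hnorm x)\<^sup>2 + 2 * Re (hinner x y) + (hnorm y)\<^sup>2"
    using hinner_commute[of y x]
    by (simp add: hnorm_square hinner_add_left hinner_add_right)
  also have "\<dots> \<le> (hnorm x)\<^sup>2 + 2 * (hnorm x * hnorm y) + (hnorm y)\<^sup>2"
    using hinner_cauchy_schwarz[of x y] abs_Re_le_cmod[of "hinner x y"] by linarith
  also have "\<dots> = (hnorm x + hnorm y)\<^sup>2"
    by (simp add: power2_sum)
  finally show ?thesis
    by (rule power2_le_imp_le) simp
qed

lemma hnorm_minus_commute: "hnorm (x - y) = hnorm (y - x)"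
  using hnorm_hscale[of "- 1" "y - x"] by (simp add: hscale_minus_left hscale_one)

lemma hnorm_parallelogram:
  "(hnorm (x - y))\<^sup>2 = 2 * (hnorm x)\<^sup>2 + 2 * (hnorm y)\<^sup>2 - (hnorm (x + y))\<^sup>2"
  by (simp add: hnorm_square hinner_add_left hinner_add_right hinner_diff_left hinner_diff_right)

lemma hilbert_complete:
  fixes X :: "nat \<Rightarrow> 'a::chilbert"
  assumes "\<forall>e>0. \<exists>N. \<forall>m\<ge>N. \<forall>n\<ge>N. hnorm (X m - X n) < e"
  obtains L where "(\<lambda>n. hnorm (X n - L)) \<longlonglongrightarrow> 0"
  using hcomplete[folded hnorm_def] assms by blast

section \<open>Riesz representation and adjoints\<close>

lemma bounded_opD:
  assumes "bounded_op T"
  shows bounded_op_add: "T (x + y) = T x + T y"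
    and bounded_op_hscale: "T (c *\<^sub>H x) = c *\<^sub>H T x"
    and bounded_op_bound: "\<exists>M. \<forall>x. hnorm (T x) \<le> M * hnorm x"
  using assms unfolding bounded_op_def by blast+

lemma bounded_op_zero: "bounded_op T \<Longrightarrow> T 0 = 0"
  using bounded_op_add[of T 0 0] by simp

lemma bounded_op_diff: "bounded_op T \<Longrightarrow> T (x - y) = T x - T y"
  using bounded_op_add[of T y "x - y"] by simp

lemma bounded_op_tendsto:
  assumes "bounded_op T" and "(\<lambda>n. hnorm (X n - L)) \<longlonglongrightarrow> 0"
  shows "(\<lambda>n. hnorm (T (X n) - T L)) \<longlonglongrightarrow> 0"
proof -
  obtain M where M: "\<And>x. hnorm (T x) \<le> M * hnorm x"
    using bounded_op_bound[OF assms(1)] by blast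
  have "norm (hnorm (T (X n) - T L)) \<le> M * hnorm (X n - L)" for n
    using M[of "X n - L"] by (simp add: bounded_op_diff[OF assms(1)])
  then show ?thesis
    by (intro Lim_null_comparison[OF always_eventually tendsto_mult_right_zero[OF assms(2)]]) blast
qed

lemma hnorm_limit_le:
  assumes "(\<lambda>n. hnorm (X n - L)) \<longlonglongrightarrow> 0" and "\<And>n. hnorm (X n) \<le> r n" and "r \<longlonglongrightarrow> \<rho>"
  shows "hnorm L \<le> \<rho>"
proof (rule LIMSEQ_le_const)
  show "(\<lambda>n. r n + hnorm (X n - L)) \<longlonglongrightarrow> \<rho>"
    using tendsto_add[OF assms(3,1)] by simp
  have "hnorm L \<le> r n + hnorm (X n - L)" for n
    using hnorm_triangle[of "X n" "L - X n"] assms(2)[of n] hnorm_minus_commute[of L "X n"]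
    by simp
  then show "\<exists>N. \<forall>n\<ge>N. hnorm L \<le> r n + hnorm (X n - L)"
    by blast
qed

lemma minimizing_sequence_Cauchy:
  fixes X :: "nat \<Rightarrow> 'a::cinner_space"
  assumes mid: "\<And>m n. 4 * d \<le> (hnorm (X m + X n))\<^sup>2"
    and small: "\<And>n. (hnorm (X n))\<^sup>2 < d + inverse (real (Suc n))"
  shows "\<forall>e>0. \<exists>N. \<forall>m\<ge>N. \<forall>n\<ge>N. hnorm (X m - X n) < e"
proof (intro allI impI)
  fix e :: real
  assume "e > 0"
  then obtain N where N: "inverse (real (Suc N)) < e\<^sup>2 / 4"
    using reals_Archimedean by (metis divide_pos_pos zero_less_numeral zero_less_power)
  have "hnorm (X m - X n) < e" if "N \<le> m" "N \<le> n" for m n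
  proof -
    have "inverse (real (Suc m)) \<le> inverse (real (Suc N))"
      and "inverse (real (Suc n)) \<le> inverse (real (Suc N))"
      using that by (simp_all add: le_imp_inverse_le)
    then have "(hnorm (X m - X n))\<^sup>2 < e\<^sup>2"
      using hnorm_parallelogram[of "X m" "X n"] mid[of m n] small[of m] small[of n] N by linarith
    then show ?thesis
      using \<open>e > 0\<close> by (simp add: power_less_imp_less_base)
  qed
  then show "\<exists>N. \<forall>m\<ge>N. \<forall>n\<ge>N. hnorm (X m - X n) < e"
    by blast
qed

lemma level_set_min_norm:
  fixes \<phi> :: "'a::chilbert \<Rightarrow> complex"
  assumes \<phi>: "bounded_op \<phi>" and "\<phi> x0 = 1"
  obtains L where "\<phi> L = 1" and "\<And>y. \<phi> y = 1 \<Longrightarrow> hnorm L \<le> hnorm y"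
proof -
  define S where "S = (\<lambda>y. (hnorm y)\<^sup>2) ` {y. \<phi> y = 1}"
  define d where "d = Inf S"
  have "S \<noteq> {}"
    using \<open>\<phi> x0 = 1\<close> by (auto simp: S_def)
  have "bdd_below S"
    unfolding S_def by (rule bdd_belowI2[of _ 0]) simp
  have d_le: "d \<le> (hnorm y)\<^sup>2" if "\<phi> y = 1" for y
    unfolding d_def by (rule cInf_lower) (use that \<open>bdd_below S\<close> in \<open>auto simp: S_def\<close>)
  have "\<exists>y. \<phi> y = 1 \<and> (hnorm y)\<^sup>2 < d + inverse (real (Suc n))" for n
  proof -
    have "Inf S < d + inverse (real (Suc n))"
      by (simp add: d_def)
    then obtain s where "s \<in> S" and "s < d + inverse (real (Suc n))"
      using cInf_less_iff[OF \<open>S \<noteq> {}\<close> \<open>bdd_below S\<close>] by blast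
    then show ?thesis
      by (auto simp: S_def)
  qed
  then obtain X where X1: "\<And>n. \<phi> (X n) = 1"
    and small: "\<And>n. (hnorm (X n))\<^sup>2 < d + inverse (real (Suc n))"
    by metis
  have mid: "4 * d \<le> (hnorm (X m + X n))\<^sup>2" for m n
  proof -
    have "\<phi> ((1 / 2) *\<^sub>H (X m + X n)) = 1"
      using X1 by (simp add: bounded_op_hscale[OF \<phi>] bounded_op_add[OF \<phi>] hscale_complex_def)
    then have "d \<le> (hnorm ((1 / 2) *\<^sub>H (X m + X n)))\<^sup>2"
      by (rule d_le)
    then show ?thesis
      by (simp add: hnorm_hscale power_divide)
  qed
  obtain L where L: "(\<lambda>n. hnorm (X n - L)) \<longlonglongrightarrow> 0"
    using hilbert_complete[OF minimizing_sequence_Cauchy[OF mid small]] .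
  have "(\<lambda>n. cmod (1 - \<phi> L)) \<longlonglongrightarrow> 0"
    using bounded_op_tendsto[OF \<phi> L] by (simp add: X1 hnorm_complex)
  then have "\<phi> L = 1"
    by (simp add: LIMSEQ_const_iff)
  moreover have "hnorm L \<le> sqrt d"
  proof (rule hnorm_limit_le[OF L])
    show "hnorm (X n) \<le> sqrt (d + inverse (real (Suc n)))" for n
      by (rule real_le_rsqrt) (use small[of n] in linarith)
    have "(\<lambda>n. d + inverse (real (Suc n))) \<longlonglongrightarrow> d + 0"
      by (intro tendsto_add tendsto_const LIMSEQ_inverse_real_of_nat)
    from tendsto_real_sqrt[OF this]
    show "(\<lambda>n. sqrt (d + inverse (real (Suc n)))) \<longlonglongrightarrow> sqrt d"
      by simp
  qed
  then have "hnorm L \<le> hnorm y" if "\<phi> y = 1" for y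
    using real_le_lsqrt[OF hnorm_nonneg d_le[OF that]] by linarith
  ultimately show ?thesis
    using that by blast
qed

text \<open>Otherwise subtracting from \<open>L\<close> its projection onto a kernel vector keeps it in the
  level set and shortens it.\<close>
lemma min_norm_orthogonal_kernel:
  fixes \<phi> :: "'a::chilbert \<Rightarrow> complex"
  assumes \<phi>: "bounded_op \<phi>" and "\<phi> L = 1" and min: "\<And>y. \<phi> y = 1 \<Longrightarrow> hnorm L \<le> hnorm y"
    and "\<phi> v = 0"
  shows "hinner L v = 0"
proof (rule ccontr)
  assume ne: "hinner L v \<noteq> 0"
  then have "v \<noteq> 0"
    by auto
  have "\<phi> (L - (hinner L v / hinner v v) *\<^sub>H v) = 1"
    using \<open>\<phi> L = 1\<close> \<open>\<phi> v = 0\<close>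
    by (simp add: bounded_op_diff[OF \<phi>] bounded_op_hscale[OF \<phi>] hscale_complex_def)
  then have "(hnorm L)\<^sup>2 \<le> (hnorm L)\<^sup>2 - (cmod (hinner L v))\<^sup>2 / (hnorm v)\<^sup>2"
    using min hnorm_diff_projection[OF \<open>v \<noteq> 0\<close>, of L] by (metis hnorm_nonneg power_mono)
  moreover have "0 < (cmod (hinner L v))\<^sup>2 / (hnorm v)\<^sup>2"
    using ne \<open>v \<noteq> 0\<close> by simp
  ultimately show False
    by linarith
qed

theorem riesz_representation:
  fixes \<phi> :: "'a::chilbert \<Rightarrow> complex"
  assumes \<phi>: "bounded_op \<phi>"
  obtains r where "\<And>x. \<phi> x = hinner x r"
proof (cases "\<forall>x. \<phi> x = 0")
  case True
  then show ?thesis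
    using that[of 0] by simp
next
  case False
  then obtain x1 where "\<phi> x1 \<noteq> 0"
    by blast
  then have "\<phi> ((1 / \<phi> x1) *\<^sub>H x1) = 1"
    by (simp add: bounded_op_hscale[OF \<phi>] hscale_complex_def)
  then obtain L where L1: "\<phi> L = 1" and min: "\<And>y. \<phi> y = 1 \<Longrightarrow> hnorm L \<le> hnorm y"
    using level_set_min_norm[OF \<phi>] by blast
  have "L \<noteq> 0"
    using L1 bounded_op_zero[OF \<phi>] by auto
  have "\<phi> x = hinner x ((1 / of_real ((hnorm L)\<^sup>2)) *\<^sub>H L)" for x
  proof -
    have "\<phi> (x - \<phi> x *\<^sub>H L) = 0"
      using L1 by (simp add: bounded_op_diff[OF \<phi>] bounded_op_hscale[OF \<phi>] hscale_complex_def)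
    then have "hinner L (x - \<phi> x *\<^sub>H L) = 0"
      using min_norm_orthogonal_kernel[OF \<phi> L1 min] by blast
    then have "hinner L x = cnj (\<phi> x) * of_real ((hnorm L)\<^sup>2)"
      by (simp add: hinner_diff_right hinner_scale_right hinner_self_eq_hnorm)
    then have "hinner x L = \<phi> x * of_real ((hnorm L)\<^sup>2)"
      using hinner_commute[of x L] by simp
    then show ?thesis
      using \<open>L \<noteq> 0\<close> by (simp add: hinner_scale_right)
  qed
  then show ?thesis
    using that by blast
qed

lemma bounded_op_hinner_left:
  fixes T :: "'a::chilbert \<Rightarrow> 'b::chilbert"
  assumes T: "bounded_op T"
  shows "bounded_op (\<lambda>x. hinner (T x) y)"
proof -
  obtain M where M: "\<And>x. hnorm (T x) \<le> M * hnorm x"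
    using bounded_op_bound[OF T] by blast
  show ?thesis
    unfolding bounded_op_def
  proof (intro conjI allI exI[of _ "M * hnorm y"])
    show "hinner (T (x1 + x2)) y = hinner (T x1) y + hinner (T x2) y" for x1 x2
      by (simp add: bounded_op_add[OF T] hinner_add_left)
    show "hinner (T (c *\<^sub>H x)) y = c *\<^sub>H hinner (T x) y" for c x
      by (simp add: bounded_op_hscale[OF T] hinner_scale_left hscale_complex_def)
    show "hnorm (hinner (T x) y) \<le> M * hnorm y * hnorm x" for x
      using hinner_cauchy_schwarz[of "T x" y] mult_right_mono[OF M[of x] hnorm_nonneg[of y]]
      by (simp add: hnorm_complex ac_simps)
  qed
qed

lemma adj_exists:
  fixes T :: "'a::chilbert \<Rightarrow> 'b::chilbert"
  assumes "bounded_op T"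
  shows "\<exists>T'. \<forall>x y. hinner (T x) y = hinner x (T' y)"
proof -
  have "\<exists>r. \<forall>x. hinner (T x) y = hinner x r" for y
    by (rule riesz_representation[OF bounded_op_hinner_left[OF assms]]) blast
  then have "\<exists>T'. \<forall>y. \<forall>x. hinner (T x) y = hinner x (T' y)"
    by (rule choice[OF allI])
  then show ?thesis
    by blast
qed

lemma hinner_adj:
  fixes T :: "'a::chilbert \<Rightarrow> 'b::chilbert"
  assumes "bounded_op T"
  shows "hinner (T x) y = hinner x (adj T y)"
proof -
  have "\<forall>x y. hinner (T x) y = hinner x (adj T y)"
    unfolding adj_def by (rule someI_ex[OF adj_exists[OF assms]])
  then show ?thesis
    by simp
qed

lemma adj_eqI:
  fixes T :: "'a::chilbert \<Rightarrow> 'b::chilbert"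
  assumes T': "\<And>x y. hinner (T x) y = hinner x (T' y)"
  shows "adj T = T'"
proof
  have "\<exists>T'. \<forall>x y. hinner (T x) y = hinner x (T' y)"
    using T' by blast
  then have adj: "\<forall>x y. hinner (T x) y = hinner x (adj T y)"
    unfolding adj_def by (rule someI_ex)
  show "adj T y = T' y" for y
  proof (rule hinner_eqI)
    fix x
    have "hinner x (adj T y) = hinner (T x) y"
      using adj by simp
    also have "\<dots> = hinner x (T' y)"
      by (rule T')
    finally show "hinner x (adj T y) = hinner x (T' y)" .
  qed
qed

lemma adj_comp:
  fixes F :: "'b::chilbert \<Rightarrow> 'c::chilbert" and T :: "'a::chilbert \<Rightarrow> 'b"
  assumes "bounded_op F" and "bounded_op T"
  shows "adj (F \<circ> T) = adj T \<circ> adj F"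
  by (rule adj_eqI) (simp add: hinner_adj[OF assms(1)] hinner_adj[OF assms(2)])

lemma adj_hscale:
  fixes T :: "'a::chilbert \<Rightarrow> 'b::chilbert"
  assumes "bounded_op T"
  shows "adj T (c *\<^sub>H y) = c *\<^sub>H adj T y"
  by (rule hinner_eqI) (simp add: hinner_adj[OF assms, symmetric] hinner_scale_right)

lemma bounded_op_comp:
  fixes F :: "'b::chilbert \<Rightarrow> 'c::chilbert" and T :: "'a::chilbert \<Rightarrow> 'b"
  assumes F: "bounded_op F" and T: "bounded_op T"
  shows "bounded_op (F \<circ> T)"
proof -
  obtain M1 where M1: "\<And>x. hnorm (F x) \<le> M1 * hnorm x"
    using bounded_op_bound[OF F] by blast
  obtain M2 where M2: "\<And>x. hnorm (T x) \<le> M2 * hnorm x"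
    using bounded_op_bound[OF T] by blast
  have "hnorm (F (T x)) \<le> (max M1 0 * max M2 0) * hnorm x" for x
  proof -
    have "hnorm (F (T x)) \<le> max M1 0 * hnorm (T x)"
      using M1[of "T x"] by (meson order.trans hnorm_nonneg max.cobounded1 mult_right_mono)
    also have "\<dots> \<le> max M1 0 * (max M2 0 * hnorm x)"
      using M2[of x]
      by (meson order.trans hnorm_nonneg max.cobounded1 max.cobounded2 mult_left_mono mult_right_mono)
    finally show ?thesis
      by (simp add: ac_simps)
  qed
  then show ?thesis
    using F T unfolding bounded_op_def by auto
qed

section \<open>The defect kernel of a product\<close>

lemma nonneg_c_add: "nonneg_c a \<Longrightarrow> nonneg_c b \<Longrightarrow> nonneg_c (a + b)"
  by (simp add: nonneg_c_def)

lemma nonneg_c_of_real_mult: "0 \<le> r \<Longrightarrow> nonneg_c a \<Longrightarrow> nonneg_c (complex_of_real r * a)"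
  by (simp add: nonneg_c_def)

definition defect_kernel :: "('z \<Rightarrow> 'u::chilbert \<Rightarrow> 'y::chilbert) \<Rightarrow> real \<Rightarrow> 'z \<Rightarrow> 'z \<Rightarrow> 'y \<Rightarrow> 'y" where
  "defect_kernel S C = (\<lambda>x y v. complex_of_real (C\<^sup>2) *\<^sub>H v - S x (adj (S y) v))"

definition tensor_form ::
    "('z \<Rightarrow> 'z \<Rightarrow> 'u::chilbert \<Rightarrow> 'u) \<Rightarrow> ('z \<Rightarrow> 'z \<Rightarrow> 'v::chilbert \<Rightarrow> 'v) \<Rightarrow> nat \<Rightarrow> nat \<Rightarrow> (nat \<Rightarrow> 'z)
      \<Rightarrow> (nat \<Rightarrow> nat \<Rightarrow> 'u) \<Rightarrow> (nat \<Rightarrow> nat \<Rightarrow> 'v) \<Rightarrow> complex" where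
  "tensor_form A B n m x a b = (\<Sum>i<n. \<Sum>j<n. \<Sum>k<m. \<Sum>l<m.
      hinner (A (x i) (x j) (a j k)) (a i l) * hinner (B (x i) (x j) (b j k)) (b i l))"

definition pos_tensor_kernel2 ::
    "'z set \<Rightarrow> ('z \<Rightarrow> 'z \<Rightarrow> 'u::chilbert \<Rightarrow> 'u) \<Rightarrow> ('z \<Rightarrow> 'z \<Rightarrow> 'v::chilbert \<Rightarrow> 'v) \<Rightarrow> bool" where
  "pos_tensor_kernel2 \<Omega> A B \<longleftrightarrow>
    (\<forall>n m x a b. (\<forall>i<n. x i \<in> \<Omega>) \<longrightarrow> nonneg_c (tensor_form A B n m x a b))"

lemma pos_tensor_kernel2_eq:
  "pos_tensor_kernel2 = (pos_tensor_kernel :: 'z set \<Rightarrow> ('z \<Rightarrow> 'z \<Rightarrow> 'u::chilbert \<Rightarrow> 'u) \<Rightarrow> _)"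
  by (intro ext) (simp add: pos_tensor_kernel2_def pos_tensor_kernel_def tensor_form_def)

lemma SA_bound_iff:
  fixes S :: "'z \<Rightarrow> 'u::chilbert \<Rightarrow> 'y::chilbert"
  shows "SA_bound \<Omega> \<Psi> S C \<longleftrightarrow>
    0 \<le> C \<and> (\<forall>K\<in>admissible_kernels \<Omega> \<Psi>. pos_tensor_kernel2 \<Omega> (defect_kernel S C) (K :: 'z \<Rightarrow> 'z \<Rightarrow> 'y \<Rightarrow> 'y))"
  unfolding SA_bound_def defect_kernel_def pos_tensor_kernel2_eq ..

lemma defect_kernel_add:
  assumes "bounded_op (g x)" and "bounded_op (g y)"
  shows "defect_kernel g C x y (u + v) = defect_kernel g C x y u + defect_kernel g C x y v"
proof -
  have "adj (g y) (u + v) = adj (g y) u + adj (g y) v"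
    by (rule hinner_eqI) (simp add: hinner_add_right flip: hinner_adj[OF assms(2)])
  then show ?thesis
    by (simp add: defect_kernel_def hscale_add_right bounded_op_add[OF assms(1)])
qed

lemma defect_kernel_hscale:
  assumes "bounded_op (g x)" and "bounded_op (g y)"
  shows "defect_kernel g C x y (c *\<^sub>H v) = c *\<^sub>H defect_kernel g C x y v"
  by (simp add: defect_kernel_def adj_hscale[OF assms(2)] bounded_op_hscale[OF assms(1)]
      hscale_diff_right hscale_hscale mult.commute)

lemma defect_kernel_comp:
  assumes fx: "bounded_op (f x)" and fy: "bounded_op (f y)" and gy: "bounded_op (g y)"
  shows "defect_kernel (\<lambda>z. f z \<circ> g z) (Cf * Cg) x y v =
    complex_of_real (Cg\<^sup>2) *\<^sub>H defect_kernel f Cf x y v + f x (defect_kernel g Cg x y (adj (f y) v))"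
proof -
  define w where "w = adj (f y) v"
  have "f x (defect_kernel g Cg x y w) = complex_of_real (Cg\<^sup>2) *\<^sub>H f x w - f x (g x (adj (g y) w))"
    by (simp add: defect_kernel_def bounded_op_diff[OF fx] bounded_op_hscale[OF fx])
  moreover have "complex_of_real ((Cf * Cg)\<^sup>2) *\<^sub>H v
      = complex_of_real (Cg\<^sup>2) *\<^sub>H (complex_of_real (Cf\<^sup>2) *\<^sub>H v)"
    by (simp add: hscale_hscale power_mult_distrib mult.commute)
  ultimately show ?thesis
    by (simp add: defect_kernel_def adj_comp[OF fy gy] hscale_diff_right w_def)
qed

lemma tensor_form_defect_comp:
  fixes f :: "'z \<Rightarrow> 'y::chilbert \<Rightarrow> 'h::chilbert" and g :: "'z \<Rightarrow> 'x::chilbert \<Rightarrow> 'y"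
  assumes bf: "\<forall>z\<in>\<Omega>. bounded_op (f z)" and bg: "\<forall>z\<in>\<Omega>. bounded_op (g z)" and x: "\<forall>i<n. x i \<in> \<Omega>"
  shows "tensor_form (defect_kernel (\<lambda>z. f z \<circ> g z) (Cf * Cg)) K n m x a b =
      complex_of_real (Cg\<^sup>2) * tensor_form (defect_kernel f Cf) K n m x a b
      + tensor_form (defect_kernel g Cg) K n m x (\<lambda>j k. adj (f (x j)) (a j k)) b"
proof -
  have "hinner (defect_kernel (\<lambda>z. f z \<circ> g z) (Cf * Cg) (x i) (x j) v) w =
      complex_of_real (Cg\<^sup>2) * hinner (defect_kernel f Cf (x i) (x j) v) w
      + hinner (defect_kernel g Cg (x i) (x j) (adj (f (x j)) v)) (adj (f (x i)) w)"
    if "i < n" and "j < n" for i j v w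
    using that x bf bg
    by (simp add: defect_kernel_comp hinner_add_left hinner_scale_left hinner_adj)
  then show ?thesis
    unfolding tensor_form_def
    by (simp add: distrib_right sum.distrib sum_distrib_left mult.assoc)
qed

lemma SA_bound_comp:
  fixes f :: "'z \<Rightarrow> 'y::chilbert \<Rightarrow> 'h::chilbert" and g :: "'z \<Rightarrow> 'x::chilbert \<Rightarrow> 'y"
  assumes bf: "\<forall>z\<in>\<Omega>. bounded_op (f z)" and bg: "\<forall>z\<in>\<Omega>. bounded_op (g z)"
    and f: "SA_bound \<Omega> \<Psi> f Cf" and "0 \<le> Cg"
    and g: "\<And>K :: 'z \<Rightarrow> 'z \<Rightarrow> 'h \<Rightarrow> 'h. K \<in> admissible_kernels \<Omega> \<Psi> \<Longrightarrow>
      pos_tensor_kernel2 \<Omega> (defect_kernel g Cg) K"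
  shows "SA_bound \<Omega> \<Psi> (\<lambda>z. f z \<circ> g z) (Cf * Cg)"
  unfolding SA_bound_iff pos_tensor_kernel2_def
proof (intro conjI ballI allI impI)
  show "0 \<le> Cf * Cg"
    using f \<open>0 \<le> Cg\<close> by (simp add: SA_bound_iff)
  fix K :: "'z \<Rightarrow> 'z \<Rightarrow> 'h \<Rightarrow> 'h" and n m :: nat and x :: "nat \<Rightarrow> 'z" and a b :: "nat \<Rightarrow> nat \<Rightarrow> 'h"
  assume K: "K \<in> admissible_kernels \<Omega> \<Psi>" and x: "\<forall>i<n. x i \<in> \<Omega>"
  have "nonneg_c (tensor_form (defect_kernel f Cf) K n m x a b)"
    using f K x by (simp add: SA_bound_iff pos_tensor_kernel2_def)
  moreover have "nonneg_c (tensor_form (defect_kernel g Cg) K n m x (\<lambda>j k. adj (f (x j)) (a j k)) b)"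
    using g[OF K] x by (simp add: pos_tensor_kernel2_def)
  ultimately show "nonneg_c (tensor_form (defect_kernel (\<lambda>z. f z \<circ> g z) (Cf * Cg)) K n m x a b)"
    unfolding tensor_form_defect_comp[OF bf bg x]
    by (intro nonneg_c_add nonneg_c_of_real_mult) simp_all
qed

section \<open>Rank-one kernels and the scalar case\<close>

lemma bounded_op_on_complex:
  fixes T :: "complex \<Rightarrow> 'b::chilbert"
  assumes "bounded_op T"
  shows "T c = c *\<^sub>H T 1"
  using bounded_op_hscale[OF assms, of c 1] by (simp add: hscale_complex_def)

definition rank_one_kernel :: "('z \<Rightarrow> 'z \<Rightarrow> complex \<Rightarrow> complex) \<Rightarrow> 'y::chilbert \<Rightarrow> 'z \<Rightarrow> 'z \<Rightarrow> 'y \<Rightarrow> 'y" where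
  "rank_one_kernel K e x y v = (K x y 1 * hinner v e) *\<^sub>H e"

lemma kernel_form_rank_one_kernel:
  assumes K: "\<forall>x\<in>\<Omega>. \<forall>y\<in>\<Omega>. bounded_op (K x y)" and x: "\<forall>i<n. x i \<in> \<Omega>"
  shows "(\<Sum>i<n. \<Sum>j<n. hinner (rank_one_kernel K e (x i) (x j) (v j)) (v i)) =
    (\<Sum>i<n. \<Sum>j<n. hinner (K (x i) (x j) (hinner (v j) e)) (hinner (v i) e))"
proof (intro sum.cong refl)
  fix i j
  assume "i \<in> {..<n}" and "j \<in> {..<n}"
  then have "bounded_op (K (x i) (x j))"
    using K x by auto
  then show "hinner (rank_one_kernel K e (x i) (x j) (v j)) (v i) =
      hinner (K (x i) (x j) (hinner (v j) e)) (hinner (v i) e)"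
    using hinner_commute[of e "v i"]
    by (simp add: rank_one_kernel_def bounded_op_on_complex[of "K (x i) (x j)" "hinner (v j) e"]
        hinner_scale_left hinner_complex_def hscale_complex_def mult_ac)
qed

lemma bounded_op_rank_one_kernel: "bounded_op (rank_one_kernel K e x y)"
  unfolding bounded_op_def
proof (intro conjI allI exI[of _ "cmod (K x y 1) * (hnorm e)\<^sup>2"])
  show "rank_one_kernel K e x y (u + v) = rank_one_kernel K e x y u + rank_one_kernel K e x y v" for u v
    by (simp add: rank_one_kernel_def hinner_add_left distrib_left hscale_add_left)
  show "rank_one_kernel K e x y (c *\<^sub>H v) = c *\<^sub>H rank_one_kernel K e x y v" for c v
    by (simp add: rank_one_kernel_def hinner_scale_left hscale_hscale ac_simps)
  show "hnorm (rank_one_kernel K e x y v) \<le> cmod (K x y 1) * (hnorm e)\<^sup>2 * hnorm v" for v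
    using mult_left_mono[OF hinner_cauchy_schwarz[of v e], of "cmod (K x y 1) * hnorm e"]
    by (simp add: rank_one_kernel_def hnorm_hscale norm_mult power2_eq_square mult_ac)
qed

lemma pos_kernel_rank_one_kernel:
  assumes "\<forall>x\<in>\<Omega>. \<forall>y\<in>\<Omega>. bounded_op (K x y)" and "pos_kernel \<Omega> K"
  shows "pos_kernel \<Omega> (rank_one_kernel K e)"
  using assms unfolding pos_kernel_def by (simp add: kernel_form_rank_one_kernel)

text \<open>The reproducing kernel space of \<open>K(x,y) e e\<^sup>*\<close> is \<open>H(K) \<otimes> e\<close>.\<close>
lemma rkhs_ball_rank_one_kernelD:
  fixes K :: "'z \<Rightarrow> 'z \<Rightarrow> complex \<Rightarrow> complex" and e :: "'y::chilbert"
  assumes e: "hinner e e = 1" and K: "\<forall>x\<in>\<Omega>. \<forall>y\<in>\<Omega>. bounded_op (K x y)"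
    and h: "rkhs_ball \<Omega> (rank_one_kernel K e) h C"
  shows "rkhs_ball \<Omega> K (\<lambda>z. hinner (h z) e) C" and "\<forall>z\<in>\<Omega>. h z = hinner (h z) e *\<^sub>H e"
proof -
  have C: "0 \<le> C"
    using h by (simp add: rkhs_ball_def)
  have ball: "(cmod (\<Sum>i<n. hinner (h (x i)) (v i)))\<^sup>2 \<le>
      C\<^sup>2 * Re (\<Sum>i<n. \<Sum>j<n. hinner (rank_one_kernel K e (x i) (x j) (v j)) (v i))"
    if "\<forall>i<n. x i \<in> \<Omega>" for n :: nat and x :: "nat \<Rightarrow> 'z" and v
    using h that unfolding rkhs_ball_def by blast
  show "rkhs_ball \<Omega> K (\<lambda>z. hinner (h z) e) C"
    unfolding rkhs_ball_def
  proof (intro conjI allI impI C)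
    fix n and x :: "nat \<Rightarrow> 'z" and s :: "nat \<Rightarrow> complex"
    assume x: "\<forall>i<n. x i \<in> \<Omega>"
    have "(\<Sum>i<n. \<Sum>j<n. hinner (rank_one_kernel K e (x i) (x j) (s j *\<^sub>H e)) (s i *\<^sub>H e))
        = (\<Sum>i<n. \<Sum>j<n. hinner (K (x i) (x j) (s j)) (s i))"
      unfolding kernel_form_rank_one_kernel[OF K x] by (simp add: hinner_scale_left e)
    moreover have "(\<Sum>i<n. hinner (h (x i)) (s i *\<^sub>H e)) = (\<Sum>i<n. hinner (hinner (h (x i)) e) (s i))"
      by (simp add: hinner_scale_right hinner_complex_def mult.commute)
    ultimately show "(cmod (\<Sum>i<n. hinner (hinner (h (x i)) e) (s i)))\<^sup>2 \<le>
        C\<^sup>2 * Re (\<Sum>i<n. \<Sum>j<n. hinner (K (x i) (x j) (s j)) (s i))"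
      using ball[OF x, of "\<lambda>i. s i *\<^sub>H e"] by (simp only:)
  qed
  show "\<forall>z\<in>\<Omega>. h z = hinner (h z) e *\<^sub>H e"
  proof
    fix z
    assume "z \<in> \<Omega>"
    define d where "d = h z - hinner (h z) e *\<^sub>H e"
    have de: "hinner d e = 0"
      by (simp add: d_def hinner_diff_left hinner_scale_left e)
    have "(cmod (hinner (h z) d))\<^sup>2 \<le> 0"
      using ball[of 1 "\<lambda>_. z" "\<lambda>_. d"] \<open>z \<in> \<Omega>\<close> by (simp add: rank_one_kernel_def de)
    then have "hinner (h z) d = 0"
      by simp
    then have "hinner d d = 0"
      using de hinner_commute[of e d] by (simp add: d_def hinner_diff_left hinner_scale_left)
    then show "h z = hinner (h z) e *\<^sub>H e"
      by (simp add: d_def hinner_self_eq_0)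
  qed
qed

lemma rkhs_ball_rank_one_kernelI:
  fixes K :: "'z \<Rightarrow> 'z \<Rightarrow> complex \<Rightarrow> complex" and e :: "'y::chilbert"
  assumes K: "\<forall>x\<in>\<Omega>. \<forall>y\<in>\<Omega>. bounded_op (K x y)"
    and h0: "rkhs_ball \<Omega> K h0 C" and h: "\<forall>z\<in>\<Omega>. h z = h0 z *\<^sub>H e"
  shows "rkhs_ball \<Omega> (rank_one_kernel K e) h C"
  unfolding rkhs_ball_def
proof (intro conjI allI impI)
  show "0 \<le> C"
    using h0 by (simp add: rkhs_ball_def)
  fix n and x :: "nat \<Rightarrow> 'z" and v :: "nat \<Rightarrow> 'y"
  assume x: "\<forall>i<n. x i \<in> \<Omega>"
  have "(\<Sum>i<n. hinner (h (x i)) (v i)) = (\<Sum>i<n. hinner (h0 (x i)) (hinner (v i) e))"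
  proof (rule sum.cong[OF refl])
    fix i
    assume "i \<in> {..<n}"
    then have "h (x i) = h0 (x i) *\<^sub>H e"
      using h x by simp
    then show "hinner (h (x i)) (v i) = hinner (h0 (x i)) (hinner (v i) e)"
      using hinner_commute[of e "v i"] by (simp add: hinner_scale_left hinner_complex_def)
  qed
  then show "(cmod (\<Sum>i<n. hinner (h (x i)) (v i)))\<^sup>2 \<le>
      C\<^sup>2 * Re (\<Sum>i<n. \<Sum>j<n. hinner (rank_one_kernel K e (x i) (x j) (v j)) (v i))"
    using h0 x unfolding rkhs_ball_def kernel_form_rank_one_kernel[OF K x] by simp
qed

lemma admissible_rank_one_kernel:
  fixes K :: "'z \<Rightarrow> 'z \<Rightarrow> complex \<Rightarrow> complex" and e :: "'y::chilbert"
  assumes K: "K \<in> admissible_kernels \<Omega> \<Psi>" and e: "hinner e e = 1"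
  shows "rank_one_kernel K e \<in> admissible_kernels \<Omega> \<Psi>"
proof -
  have Kb: "\<forall>x\<in>\<Omega>. \<forall>y\<in>\<Omega>. bounded_op (K x y)" and "pos_kernel \<Omega> K"
    and Kmult: "\<And>\<psi>. \<psi> \<in> \<Psi> \<Longrightarrow> mult_contraction \<Omega> \<psi> K"
    using K by (auto simp: admissible_kernels_def)
  have "mult_contraction \<Omega> \<psi> (rank_one_kernel K e)" if "\<psi> \<in> \<Psi>" for \<psi>
    unfolding mult_contraction_def
  proof (intro allI impI)
    fix h :: "'z \<Rightarrow> 'y" and C
    assume "rkhs_ball \<Omega> (rank_one_kernel K e) h C"
    note h = rkhs_ball_rank_one_kernelD[OF e Kb this]
    have "rkhs_ball \<Omega> K (\<lambda>z. \<psi> z *\<^sub>H hinner (h z) e) C"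
      using Kmult[OF that] h(1) by (simp add: mult_contraction_def)
    moreover have "\<psi> z *\<^sub>H h z = (\<psi> z *\<^sub>H hinner (h z) e) *\<^sub>H e" if "z \<in> \<Omega>" for z
    proof -
      have "\<psi> z *\<^sub>H h z = \<psi> z *\<^sub>H (hinner (h z) e *\<^sub>H e)"
        using h(2) that by (intro arg_cong[where f = "hscale (\<psi> z)"]) blast
      then show ?thesis
        by (simp add: hscale_hscale hscale_complex_def)
    qed
    ultimately show "rkhs_ball \<Omega> (rank_one_kernel K e) (\<lambda>z. \<psi> z *\<^sub>H h z) C"
      by (intro rkhs_ball_rank_one_kernelI[OF Kb]) blast+
  qed
  then show ?thesis
    using Kb \<open>pos_kernel \<Omega> K\<close>
    by (simp add: admissible_kernels_def bounded_op_rank_one_kernel pos_kernel_rank_one_kernel)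
qed

text \<open>Against a scalar kernel, \<open>\<Sum>\<^sub>k a\<^sub>j\<^sub>k \<otimes> b\<^sub>j\<^sub>k \<in> Y \<otimes> \<complex>\<close> acts as the single vector \<open>\<Sum>\<^sub>k b\<^sub>j\<^sub>k a\<^sub>j\<^sub>k\<close>.\<close>
lemma tensor_form_scalar_kernel:
  fixes K :: "'z \<Rightarrow> 'z \<Rightarrow> complex \<Rightarrow> complex"
  assumes K: "\<forall>x\<in>\<Omega>. \<forall>y\<in>\<Omega>. bounded_op (K x y)" and x: "\<forall>i<n. x i \<in> \<Omega>"
    and A_add: "\<And>i j u v. i < n \<Longrightarrow> j < n \<Longrightarrow> A (x i) (x j) (u + v) = A (x i) (x j) u + A (x i) (x j) v"
    and A_hscale: "\<And>i j c v. i < n \<Longrightarrow> j < n \<Longrightarrow> A (x i) (x j) (c *\<^sub>H v) = c *\<^sub>H A (x i) (x j) v"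
  shows "tensor_form A K n m x a b = (\<Sum>i<n. \<Sum>j<n. K (x i) (x j) 1 *
      hinner (A (x i) (x j) (\<Sum>k<m. b j k *\<^sub>H a j k)) (\<Sum>l<m. b i l *\<^sub>H a i l))"
  unfolding tensor_form_def
proof (intro sum.cong refl)
  fix i j
  assume "i \<in> {..<n}" and "j \<in> {..<n}"
  then have ij: "i < n" "j < n"
    by simp_all
  have "bounded_op (K (x i) (x j))"
    using K x ij by simp
  then have K_form: "hinner (K (x i) (x j) (b j k)) (b i l) = K (x i) (x j) 1 * (b j k * cnj (b i l))" for k l
    using bounded_op_on_complex[of "K (x i) (x j)" "b j k"]
    by (simp add: hinner_complex_def hscale_complex_def mult_ac)
  have "A (x i) (x j) (\<Sum>k<m. b j k *\<^sub>H a j k) = (\<Sum>k<m. b j k *\<^sub>H A (x i) (x j) (a j k))"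
    using sum_comp_morphism[of "A (x i) (x j)" "\<lambda>k. b j k *\<^sub>H a j k" "{..<m}"]
      A_add[OF ij] A_hscale[OF ij, of 0 0]
    by (simp add: A_hscale[OF ij])
  then have A_form: "hinner (A (x i) (x j) (\<Sum>k<m. b j k *\<^sub>H a j k)) (\<Sum>l<m. b i l *\<^sub>H a i l)
      = (\<Sum>k<m. \<Sum>l<m. b j k * cnj (b i l) * hinner (A (x i) (x j) (a j k)) (a i l))"
    by (simp add: hinner_sum_left hinner_sum_right hinner_scale_left hinner_scale_right
        sum_distrib_left mult.assoc) (subst sum.swap, simp add: mult.left_commute)
  show "(\<Sum>k<m. \<Sum>l<m. hinner (A (x i) (x j) (a j k)) (a i l) * hinner (K (x i) (x j) (b j k)) (b i l))
      = K (x i) (x j) 1 * hinner (A (x i) (x j) (\<Sum>k<m. b j k *\<^sub>H a j k)) (\<Sum>l<m. b i l *\<^sub>H a i l)"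
    unfolding A_form K_form sum_distrib_left by (intro sum.cong refl) (simp only: mult_ac)
qed

lemma pos_tensor_kernel2_scalar_kernel:
  fixes g :: "'z \<Rightarrow> 'x::chilbert \<Rightarrow> 'y::chilbert" and K :: "'z \<Rightarrow> 'z \<Rightarrow> complex \<Rightarrow> complex"
  assumes bg: "\<forall>z\<in>\<Omega>. bounded_op (g z)" and g: "SA_bound \<Omega> \<Psi> g C"
    and K: "K \<in> admissible_kernels \<Omega> \<Psi>"
  shows "pos_tensor_kernel2 \<Omega> (defect_kernel g C) K"
  unfolding pos_tensor_kernel2_def
proof (intro allI impI)
  fix n m and x :: "nat \<Rightarrow> 'z" and a :: "nat \<Rightarrow> nat \<Rightarrow> 'y" and b :: "nat \<Rightarrow> nat \<Rightarrow> complex"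
  assume x: "\<forall>i<n. x i \<in> \<Omega>"
  have Kb: "\<forall>x\<in>\<Omega>. \<forall>y\<in>\<Omega>. bounded_op (K x y)"
    using K by (simp add: admissible_kernels_def)
  define c where "c j = (\<Sum>k<m. b j k *\<^sub>H a j k)" for j
  have form: "tensor_form (defect_kernel g C) K n m x a b =
      (\<Sum>i<n. \<Sum>j<n. K (x i) (x j) 1 * hinner (defect_kernel g C (x i) (x j) (c j)) (c i))"
    unfolding c_def using x bg
    by (intro tensor_form_scalar_kernel[OF Kb x]) (simp_all add: defect_kernel_add defect_kernel_hscale)
  show "nonneg_c (tensor_form (defect_kernel g C) K n m x a b)"
  proof (cases "\<exists>v::'y. v \<noteq> 0")
    case False
    then have "a i l = 0" for i l
      by blast
    then show ?thesis
      by (simp add: tensor_form_def nonneg_c_def)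
  next
    case True
    then obtain v :: 'y where "v \<noteq> 0"
      by blast
    define e where "e = (1 / of_real (hnorm v)) *\<^sub>H v"
    have e: "hinner e e = 1"
      using \<open>v \<noteq> 0\<close>
      by (simp add: e_def hinner_scale_left hinner_scale_right hinner_self_eq_hnorm[of v] power2_eq_square)
    have "nonneg_c (tensor_form (defect_kernel g C) (rank_one_kernel K e) n 1 x (\<lambda>j _. c j) (\<lambda>_ _. e))"
      using g admissible_rank_one_kernel[OF K e] x by (simp add: SA_bound_iff pos_tensor_kernel2_def)
    moreover have "tensor_form (defect_kernel g C) (rank_one_kernel K e) n 1 x (\<lambda>j _. c j) (\<lambda>_ _. e)
        = tensor_form (defect_kernel g C) K n m x a b"
      unfolding form by (simp add: tensor_form_def rank_one_kernel_def hinner_scale_left e mult.commute)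
    ultimately show ?thesis
      by simp
  qed
qed

lemma SA_bound_nonneg: "SA_bound \<Omega> \<Psi> S C \<Longrightarrow> 0 \<le> C"
  by (simp add: SA_bound_def)

lemma bdd_below_SA_bound: "bdd_below {C. SA_bound \<Omega> \<Psi> S C}"
  by (rule bdd_belowI[of _ 0]) (simp add: SA_bound_nonneg)

lemma SA_Psi_bound_less:
  assumes "S \<in> SA_Psi \<Omega> \<Psi>" and "0 < d"
  obtains C where "SA_bound \<Omega> \<Psi> S C" and "C < 1 + d"
proof -
  have "{C. SA_bound \<Omega> \<Psi> S C} \<noteq> {}" and "Inf {C. SA_bound \<Omega> \<Psi> S C} < 1 + d"
    using assms by (auto simp: SA_Psi_def Hinf_Psi_def Psi_norm_def)
  then obtain C where "C \<in> {C. SA_bound \<Omega> \<Psi> S C}" and "C < 1 + d"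
    using cInf_less_iff[OF _ bdd_below_SA_bound] by blast
  then show ?thesis
    using that by blast
qed

lemma SA_PsiI:
  assumes "\<forall>z\<in>\<Omega>. bounded_op (S z)" and "\<And>e. 0 < e \<Longrightarrow> \<exists>C. SA_bound \<Omega> \<Psi> S C \<and> C \<le> 1 + e"
  shows "S \<in> SA_Psi \<Omega> \<Psi>"
proof -
  have "Psi_norm \<Omega> \<Psi> S \<le> 1 + e" if e: "0 < e" for e
  proof -
    obtain C where "SA_bound \<Omega> \<Psi> S C" and "C \<le> 1 + e"
      using assms(2)[OF e] by blast
    moreover have "Psi_norm \<Omega> \<Psi> S \<le> C"
      unfolding Psi_norm_def by (rule cInf_lower) (simp_all add: bdd_below_SA_bound \<open>SA_bound \<Omega> \<Psi> S C\<close>)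
    ultimately show ?thesis
      by linarith
  qed
  then have "Psi_norm \<Omega> \<Psi> S \<le> 1"
    by (rule field_le_epsilon)
  moreover have "\<exists>C. SA_bound \<Omega> \<Psi> S C"
    using assms(2)[of 1] by auto
  ultimately show ?thesis
    using assms(1) by (simp add: SA_Psi_def Hinf_Psi_def)
qed

lemma SA_Psi_comp:
  fixes f :: "'z \<Rightarrow> 'y::chilbert \<Rightarrow> 'h::chilbert" and g :: "'z \<Rightarrow> 'x::chilbert \<Rightarrow> 'y"
  assumes g: "g \<in> SA_Psi \<Omega> \<Psi>" and f: "f \<in> SA_Psi \<Omega> \<Psi>"
    and g_pos: "\<And>C (K :: 'z \<Rightarrow> 'z \<Rightarrow> 'h \<Rightarrow> 'h). SA_bound \<Omega> \<Psi> g C \<Longrightarrow> K \<in> admissible_kernels \<Omega> \<Psi> \<Longrightarrow>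
      pos_tensor_kernel2 \<Omega> (defect_kernel g C) K"
  shows "(\<lambda>z. f z \<circ> g z) \<in> SA_Psi \<Omega> \<Psi>"
proof (rule SA_PsiI)
  have bf: "\<forall>z\<in>\<Omega>. bounded_op (f z)" and bg: "\<forall>z\<in>\<Omega>. bounded_op (g z)"
    using f g by (auto simp: SA_Psi_def Hinf_Psi_def)
  then show "\<forall>z\<in>\<Omega>. bounded_op (f z \<circ> g z)"
    by (simp add: bounded_op_comp)
  fix e :: real
  assume "0 < e"
  define d where "d = min 1 (e / 3)"
  have d: "0 < d" "d \<le> 1" "3 * d \<le> e"
    using \<open>0 < e\<close> by (auto simp: d_def)
  obtain Cf where Cf: "SA_bound \<Omega> \<Psi> f Cf" "Cf < 1 + d"
    using SA_Psi_bound_less[OF f \<open>0 < d\<close>] .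
  obtain Cg where Cg: "SA_bound \<Omega> \<Psi> g Cg" "Cg < 1 + d"
    using SA_Psi_bound_less[OF g \<open>0 < d\<close>] .
  have "SA_bound \<Omega> \<Psi> (\<lambda>z. f z \<circ> g z) (Cf * Cg)"
    using SA_bound_comp[OF bf bg Cf(1) SA_bound_nonneg[OF Cg(1)] g_pos[OF Cg(1)]] .
  moreover have "Cf * Cg \<le> (1 + d) * (1 + d)"
    using Cf Cg by (intro mult_mono) (auto dest: SA_bound_nonneg)
  moreover have "(1 + d) * (1 + d) \<le> 1 + e"
  proof -
    have "d * d \<le> d"
      using d by (intro mult_left_le_one_le) simp_all
    then show ?thesis
      using d unfolding ring_distribs by linarith
  qed
  ultimately show "\<exists>C. SA_bound \<Omega> \<Psi> (\<lambda>z. f z \<circ> g z) C \<and> C \<le> 1 + e"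
    by (intro exI[of _ "Cf * Cg"]) simp
qed

theorem lemma2p1:
  fixes \<Omega> :: "(complex ^ 'n) set" and \<Psi> :: "(complex ^ 'n \<Rightarrow> complex) set"
  assumes "bounded \<Omega>" and "open \<Omega>" and "connected \<Omega>" and "\<Omega> \<noteq> {}"
    and "test_functions \<Omega> \<Psi>"
  shows "(\<forall>(g :: complex ^ 'n \<Rightarrow> 'x::chilbert \<Rightarrow> 'y::chilbert) (f :: complex ^ 'n \<Rightarrow> 'y \<Rightarrow> complex).
            g \<in> SA_Psi \<Omega> \<Psi> \<and> f \<in> SA_Psi \<Omega> \<Psi> \<longrightarrow> (\<lambda>z. f z \<circ> g z) \<in> SA_Psi \<Omega> \<Psi>)
       \<and> (\<forall>(g :: complex ^ 'n \<Rightarrow> 'x \<Rightarrow> 'y) (f :: complex ^ 'n \<Rightarrow> 'y \<Rightarrow> 'y).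
            g \<in> SA_Psi \<Omega> \<Psi> \<and> f \<in> SA_Psi \<Omega> \<Psi> \<longrightarrow> (\<lambda>z. f z \<circ> g z) \<in> SA_Psi \<Omega> \<Psi>)"
proof (intro conjI allI impI; elim conjE)
  fix g :: "complex ^ 'n \<Rightarrow> 'x \<Rightarrow> 'y" and f :: "complex ^ 'n \<Rightarrow> 'y \<Rightarrow> complex"
  assume g: "g \<in> SA_Psi \<Omega> \<Psi>" and f: "f \<in> SA_Psi \<Omega> \<Psi>"
  have "\<forall>z\<in>\<Omega>. bounded_op (g z)"
    using g by (simp add: SA_Psi_def Hinf_Psi_def)
  then show "(\<lambda>z. f z \<circ> g z) \<in> SA_Psi \<Omega> \<Psi>"
    by (intro SA_Psi_comp[OF g f] pos_tensor_kernel2_scalar_kernel)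
next
  fix g :: "complex ^ 'n \<Rightarrow> 'x \<Rightarrow> 'y" and f :: "complex ^ 'n \<Rightarrow> 'y \<Rightarrow> 'y"
  assume g: "g \<in> SA_Psi \<Omega> \<Psi>" and f: "f \<in> SA_Psi \<Omega> \<Psi>"
  show "(\<lambda>z. f z \<circ> g z) \<in> SA_Psi \<Omega> \<Psi>"
    by (rule SA_Psi_comp[OF g f]) (simp add: SA_bound_iff)
qed

end
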